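(* Consider the following setup. Let $K<\infty$ and, for $i=1,\ldots,K$, let $\{T^{(i)}_{n_i}\}$ be a sequence of test statistics for testing $H_0^{(i)}:\theta_i\in\Theta_0^{(i)}$ against $\theta_i\in\Theta^{(i)}\setminus\Theta_0^{(i)}$, with $p$-values $p_i=p_i^{(n_i)}$. Assume that under the null the statistics $T^{(1)}_{n_1},\ldots,T^{(K)}_{n_K}$ are independent for all sample sizes, and that each sequence has exact slope $c_i(\theta_i)\ge 0$, i.e. $-\frac{2}{n_i}\log p_i^{(n_i)}\to c_i(\theta_i)$ with probability one as $n_i\to\infty$, where $c_i(\theta_i)=0$ for $\theta_i\in\Theta_0^{(i)}$ and $c_i(\theta_i)>0$ otherwise. Let $n=\frac1K\sum_{i=1}^K n_i$ and assume $n_i/n\to\lambda_i>0$ with $\sum_{i=1}^K\lambda_i=K$. Assume (after relabeling) $\lambda_1c_1(\theta_1)\ge\cdots\ge\lambda_Kc_K(\theta_K)\ge0$, where exactly the first $\ell$ parameters lie in the alternatives ($\theta_i\in\Theta^{(i)}\setminus\Theta^{(i)}_0$, so $c_i(\theta_i)>0$, for $1\le i\le \ell$) and $\theta_i\in\Theta_0^{(i)}$ for $\ell<i\le K$. Let $p_{(1)}\le\cdots\le p_{(K)}$ be the ordered $p$-values and define the AFp statistic $$T_{\mathrm{AFp}}=\max_{1\le j\le K}\Big[-\log \bar F_{\chi^2_{2j}}\Big(-2\sum_{i=1}^j\log p_{(i)}\Big)\Big],$$ where $\bar F_{\chi^2_{2j}}=1-F_{\chi^2_{2j}}$ and $F_{\chi^2_{2j}}$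 is the CDF of the chi-squared distribution with $2j$ degrees of freedom. Then $T_{\mathrm{AFp}}$ is asymptotically Bahadur optimal, with exact slope $C_{\mathrm{AFp}}(\vec\theta)=\sum_{i=1}^\ell\lambda_ic_i(\theta_i)$.
   Context: The exact slope of a combination test with $p$-value $p$ (computed from its null distribution, under which $p_1,\ldots,p_K$ are i.i.d. Unif$(0,1)$) is the function $C(\vec\theta)$, $\vec\theta=(\theta_1,\ldots,\theta_K)$, such that $-\frac{2}{n}\log p\to C(\vec\theta)$ with probability one as $n\to\infty$. A combination test is called asymptotically Bahadur optimal (ABO) if its exact slope equals $\sum_{i=1}^\ell\lambda_ic_i(\theta_i)$, which is the maximal attainable exact slope for any $p$-value combination method in this setup. *)

theory Defs
  imports "HOL-Probability.Probability"
begin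

definition chisq_density :: "nat \<Rightarrow> real \<Rightarrow> real" where
  "chisq_density k x =
     (if 0 < x then x powr (real k / 2 - 1) * exp (- x / 2) / (2 powr (real k / 2) * Gamma (real k / 2))
      else 0)"

definition chisq_CDF :: "nat \<Rightarrow> real \<Rightarrow> real" where
  "chisq_CDF k x = (LINT t:{..x}|lborel. chisq_density k t)"

text \<open>Ordered p-values (0-based): ordered_pval K p i is p_(i+1), for i < K.\<close>
definition ordered_pval :: "nat \<Rightarrow> (nat \<Rightarrow> real) \<Rightarrow> nat \<Rightarrow> real" where
  "ordered_pval K p i = sort (map p [0..<K]) ! i"

definition AFp_stat :: "nat \<Rightarrow> (nat \<Rightarrow> real) \<Rightarrow> real" where
  "AFp_stat K p = Max ((\<lambda>j. - ln (1 - chisq_CDF (2 * j) (- 2 * (\<Sum>i<j. ln (ordered_pval K p i))))) ` {1..K})"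

definition null_pvals :: "nat \<Rightarrow> (nat \<Rightarrow> real) measure" where
  "null_pvals K = PiM {..<K} (\<lambda>_. uniform_measure lborel {0..1})"

definition AFp_pvalue :: "nat \<Rightarrow> real \<Rightarrow> real" where
  "AFp_pvalue K t = measure (null_pvals K) {u \<in> space (null_pvals K). t \<le> AFp_stat K u}"

end

theory Submission
  imports Defs
begin

(* For 2j degrees of freedom the chi-squared tail is a Poisson probability,
   1 - F(x) = exp(-x/2) * sum_{k<j} (x/2)^k / k!, so its negative logarithm is x/2 - O(j log(1 + x)).
   With S = - sum_i log p_i this gives S - log K - 2 K sqrt S <= T_AFp <= S (the lower bound from the
   term j = K alone). Under the null, P(T_AFp >= t) is at least exp(-t), because a single uniform
   p-value below exp(-t) already forces T_AFp >= t, and by a Chernoff bound with E[U^-a] = 1/(1-a) it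
   is at most exp(-a t) (1-a)^-K for every a < 1. Taking a = 1 - 1/n yields
   -(2/n) log p_AFp = 2S/n + o(1), and 2S/n tends to sum_i lambda_i c_i(theta_i), to which the null
   components contribute nothing. *)

definition exp_taylor :: "nat \<Rightarrow> real \<Rightarrow> real" where
  "exp_taylor j y = (\<Sum>k<j. y ^ k / fact k)"

lemma exp_taylor_Suc: "exp_taylor (Suc j) y = exp_taylor j y + y ^ j / fact j"
  by (simp add: exp_taylor_def)

lemma exp_taylor_0: "exp_taylor (Suc j) 0 = 1"
  unfolding exp_taylor_def by (induction j) auto

lemma has_real_derivative_exp_taylor:
  "(exp_taylor (Suc j) has_real_derivative exp_taylor j y) (at y)"
proof -
  have "((\<lambda>y. \<Sum>k<Suc j. y ^ k / fact k) has_real_derivative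
          (\<Sum>k<Suc j. real k * y ^ (k - 1) / fact k)) (at y)"
    by (auto intro!: derivative_eq_intros)
  also have "(\<Sum>k<Suc j. real k * y ^ (k - 1) / fact k) = exp_taylor j y"
    unfolding sum.lessThan_Suc_shift exp_taylor_def by (simp del: of_nat_Suc)
  finally show ?thesis
    unfolding exp_taylor_def .
qed

lemma has_real_derivative_exp_times_exp_taylor:
  "((\<lambda>y. exp (- y) * exp_taylor (Suc j) y) has_real_derivative - exp (- y) * y ^ j / fact j) (at y)"
proof -
  have "((\<lambda>y. exp (- y) * exp_taylor (Suc j) y) has_real_derivative
          - exp (- y) * exp_taylor (Suc j) y + exp (- y) * exp_taylor j y) (at y)"
    by (auto intro!: derivative_eq_intros has_real_derivative_exp_taylor)
  then show ?thesis
    by (simp add: exp_taylor_Suc algebra_simps)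
qed

lemma exp_taylor_ge_1: assumes "0 \<le> y" shows "1 \<le> exp_taylor (Suc j) y"
proof -
  have "exp_taylor 1 y \<le> exp_taylor (Suc j) y"
    unfolding exp_taylor_def using assms by (intro sum_mono2) auto
  then show ?thesis
    by (simp add: exp_taylor_def)
qed

lemma exp_taylor_le: assumes "0 \<le> y" shows "exp_taylor j y \<le> real j * (1 + y) ^ j"
proof -
  have "y ^ k / fact k \<le> (1 + y) ^ j" if "k < j" for k
  proof -
    have "y ^ k / fact k \<le> y ^ k"
      using assms by (simp add: divide_le_eq mult_le_cancel_left1)
    also have "\<dots> \<le> (1 + y) ^ k" using assms by (intro power_mono) auto
    also have "\<dots> \<le> (1 + y) ^ j" using assms that by (intro power_increasing) auto
    finally show ?thesis .
  qed
  then have "exp_taylor j y \<le> (\<Sum>k<j. (1 + y) ^ j)"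
    unfolding exp_taylor_def by (intro sum_mono) auto
  then show ?thesis by simp
qed

lemma chisq_density_even:
  "chisq_density (2 * Suc i) t = (if 0 < t then t ^ i * exp (- t / 2) / (2 ^ Suc i * fact i) else 0)"
proof -
  have dof: "real (2 * Suc i) / 2 - 1 = real i" "real (2 * Suc i) / 2 = 1 + real i"
    by (simp_all add: field_simps)
  have "(2::real) powr (1 + real i) = 2 ^ Suc i"
    by (metis of_nat_Suc powr_realpow zero_less_numeral)
  then show ?thesis
    unfolding chisq_density_def dof Gamma_fact by (auto simp: powr_realpow)
qed

lemma has_real_derivative_chisq_CDF_even_primitive:
  "((\<lambda>t. 1 - exp (- t / 2) * exp_taylor (Suc i) (t / 2)) has_real_derivative
     t ^ i * exp (- t / 2) / (2 ^ Suc i * fact i)) (at t)"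
proof -
  have "((\<lambda>t. 1 - exp (- (t / 2)) * exp_taylor (Suc i) (t / 2)) has_real_derivative
          0 - (- exp (- (t / 2)) * (t / 2) ^ i / fact i * (1 / 2))) (at t)"
    by (intro DERIV_diff DERIV_const
          DERIV_chain2[OF has_real_derivative_exp_times_exp_taylor DERIV_cdivide[OF DERIV_ident]])
  then show ?thesis
    by (simp add: field_simps)
qed

lemma chisq_CDF_even:
  "chisq_CDF (2 * Suc i) x = (if x \<le> 0 then 0 else 1 - exp (- x / 2) * exp_taylor (Suc i) (x / 2))"
proof -
  define h where "h t = t ^ i * exp (- t / 2) / (2 ^ Suc i * fact i)" for t :: real
  have dens: "chisq_density (2 * Suc i) t = (if 0 < t then h t else 0)" for t
    unfolding chisq_density_even h_def ..
  have CDF: "chisq_CDF (2 * Suc i) x = (LINT t|lborel. indicator {..x} t * chisq_density (2 * Suc i) t)"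
    unfolding chisq_CDF_def set_lebesgue_integral_def by simp
  show ?thesis
  proof (cases "x \<le> 0")
    case True
    then have "(\<lambda>t. indicator {..x} t * chisq_density (2 * Suc i) t) = (\<lambda>_. 0)"
      unfolding dens by (auto simp: indicator_def)
    then show ?thesis using True unfolding CDF by simp
  next
    case False
    have "(LINT t|lborel. indicator {..x} t * chisq_density (2 * Suc i) t)
        = (LINT t|lborel. indicator {0..x} t *\<^sub>R h t)"
    proof (rule integral_cong_AE)
      show "AE t in lborel. indicator {..x} t * chisq_density (2 * Suc i) t = indicator {0..x} t *\<^sub>R h t"
        using AE_lborel_singleton[of 0] unfolding dens
        by eventually_elim (use False in \<open>auto simp: indicator_def\<close>)
    qed (unfold dens h_def, measurable)
    also have "\<dots> = (1 - exp (- x / 2) * exp_taylor (Suc i) (x / 2)) - (1 - exp (- 0 / 2) * exp_taylor (Suc i) (0 / 2))"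
    proof (rule integral_FTC_atLeastAtMost)
      show "0 \<le> x"
        using False by simp
      show "continuous_on {0..x} h"
        unfolding h_def by (intro continuous_intros) auto
      fix t
      show "((\<lambda>t. 1 - exp (- t / 2) * exp_taylor (Suc i) (t / 2)) has_vector_derivative h t) (at t within {0..x})"
        unfolding h_def has_real_derivative_iff_has_vector_derivative[symmetric]
        by (rule has_field_derivative_at_within[OF has_real_derivative_chisq_CDF_even_primitive])
    qed
    finally show ?thesis
      using False unfolding CDF by (simp add: exp_taylor_0)
  qed
qed

lemma neg_ln_chisq_survival_even:
  "- ln (1 - chisq_CDF (2 * Suc i) x) = (if x \<le> 0 then 0 else x / 2 - ln (exp_taylor (Suc i) (x / 2)))"
proof (cases "x \<le> 0")
  case False
  then have "0 < exp_taylor (Suc i) (x / 2)"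
    using exp_taylor_ge_1[of "x / 2" i] by simp
  then show ?thesis
    using False unfolding chisq_CDF_even by (simp add: ln_mult)
qed (unfold chisq_CDF_even, simp)

lemma neg_ln_chisq_survival_2: "- ln (1 - chisq_CDF 2 x) = max 0 (x / 2)"
  using neg_ln_chisq_survival_even[of 0 x] by (simp add: exp_taylor_def)

lemma neg_ln_chisq_survival_le:
  assumes "1 \<le> j" shows "- ln (1 - chisq_CDF (2 * j) x) \<le> max 0 (x / 2)"
proof -
  obtain i where j: "j = Suc i" using assms by (cases j) auto
  have "0 < x \<Longrightarrow> 0 \<le> ln (exp_taylor (Suc i) (x / 2))"
    using exp_taylor_ge_1[of "x / 2" i] by simp
  then show ?thesis
    unfolding j neg_ln_chisq_survival_even by auto
qed

lemma ln_one_plus_le_sqrt: assumes "0 \<le> s" shows "ln (1 + s) \<le> 2 * sqrt s"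
proof -
  have "ln (1 + s) = 2 * ln (sqrt (1 + s))"
    using assms by (simp add: ln_sqrt)
  also have "\<dots> \<le> 2 * (sqrt (1 + s) - 1)"
    using assms ln_le_minus_one[of "sqrt (1 + s)"] by simp
  also have "\<dots> \<le> 2 * sqrt s"
    using assms sqrt_add_le_add_sqrt[of 1 s] by simp
  finally show ?thesis .
qed

lemma neg_ln_chisq_survival_ge:
  assumes "1 \<le> j" "0 \<le> s"
  shows "s - ln (real j) - 2 * real j * sqrt s \<le> - ln (1 - chisq_CDF (2 * j) (2 * s))"
proof -
  obtain i where j: "j = Suc i" using assms by (cases j) auto
  have "ln (exp_taylor j s) \<le> ln (real j * (1 + s) ^ j)"
    using exp_taylor_le[of s j] exp_taylor_ge_1[of s i] assms j by (intro ln_mono) auto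
  also have "\<dots> = ln (real j) + real j * ln (1 + s)"
    using assms by (simp add: ln_mult ln_realpow)
  also have "\<dots> \<le> ln (real j) + real j * (2 * sqrt s)"
    using ln_one_plus_le_sqrt[OF assms(2)] by (intro add_left_mono mult_left_mono) auto
  finally have "s - ln (real j) - 2 * real j * sqrt s \<le> s - ln (exp_taylor j s)"
    by linarith
  moreover have "0 \<le> ln (real j)"
    using assms by simp
  ultimately show ?thesis
    using assms unfolding j neg_ln_chisq_survival_even by auto
qed

lemma borel_measurable_chisq_CDF_even [measurable]: "chisq_CDF (2 * Suc i) \<in> borel_measurable borel"
  unfolding chisq_CDF_even[abs_def] exp_taylor_def by measurable

lemma sorted_nth_le_iff_less_length_filter:
  fixes ys :: "'a::linorder list"
  assumes "sorted ys" "i < length ys"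
  shows "ys ! i \<le> c \<longleftrightarrow> i < length (filter (\<lambda>y. y \<le> c) ys)"
  using assms
proof (induction ys arbitrary: i)
  case (Cons y ys)
  show ?case
  proof (cases "y \<le> c")
    case True
    then show ?thesis using Cons by (cases i) auto
  next
    case False
    then have "filter (\<lambda>y. y \<le> c) ys = []"
      using Cons.prems(1) by (auto simp: filter_empty_conv)
    moreover have "y \<le> (y # ys) ! i"
      using Cons.prems by (cases i) auto
    ultimately show ?thesis using False by auto
  qed
qed simp

lemma sum_ordered_pval: "(\<Sum>i<K. g (ordered_pval K p i)) = (\<Sum>i<K. g (p i))"
proof -
  have "(\<Sum>i<K. g (ordered_pval K p i)) = sum_list (map g (sort (map p [0..<K])))"
    unfolding ordered_pval_def sum_list_sum_nth by (simp add: atLeast0LessThan)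
  also have "\<dots> = sum_list (map g (map p [0..<K]))"
    by (metis mset_map mset_sort sum_mset_sum_list)
  finally show ?thesis
    by (simp add: sum_list_sum_nth atLeast0LessThan)
qed

lemma ordered_pval_in_image: "i < K \<Longrightarrow> ordered_pval K p i \<in> p ` {..<K}"
proof -
  assume "i < K"
  then have "ordered_pval K p i \<in> set (sort (map p [0..<K]))"
    unfolding ordered_pval_def by (intro nth_mem) simp
  then show ?thesis by auto
qed

lemma ordered_pval_0_le: assumes "k < K" shows "ordered_pval K p 0 \<le> p k"
proof -
  let ?ys = "sort (map p [0..<K])"
  have "p k \<in> set ?ys"
    using assms by auto
  then obtain n where n: "n < length ?ys" "?ys ! n = p k"
    by (metis in_set_conv_nth)
  have "?ys ! 0 \<le> ?ys ! n"
    using n by (intro sorted_nth_mono) auto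
  then show ?thesis
    using n unfolding ordered_pval_def by simp
qed

lemma ordered_pval_le_iff:
  "i < K \<Longrightarrow> ordered_pval K p i \<le> c \<longleftrightarrow> i < card {k. k < K \<and> p k \<le> c}"
proof -
  assume "i < K"
  then have "ordered_pval K p i \<le> c \<longleftrightarrow> i < length (filter (\<lambda>y. y \<le> c) (sort (map p [0..<K])))"
    unfolding ordered_pval_def by (intro sorted_nth_le_iff_less_length_filter) auto
  also have "length (filter (\<lambda>y. y \<le> c) (sort (map p [0..<K]))) = length (filter (\<lambda>y. y \<le> c) (map p [0..<K]))"
    by (metis mset_filter mset_sort size_mset)
  also have "\<dots> = card {k. k < K \<and> p k \<le> c}"
    unfolding length_filter_conv_card by (intro arg_cong[where f=card]) auto
  finally show ?thesis .
qed

lemma borel_measurable_ordered_pval [measurable]: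
  assumes "i < K"
  shows "(\<lambda>u. ordered_pval K u i) \<in> borel_measurable (Pi\<^sub>M {..<K} (\<lambda>_. borel))"
proof (subst borel_measurable_iff_le, intro allI)
  fix c :: real
  have "real (card {k. k < K \<and> u k \<le> c}) = (\<Sum>k<K. if u k \<le> c then 1 else 0)" for u
    by (simp add: sum.If_cases Collect_conj_eq lessThan_def Int_commute)
  then have "{u \<in> space (Pi\<^sub>M {..<K} (\<lambda>_. borel)). ordered_pval K u i \<le> c} =
             {u \<in> space (Pi\<^sub>M {..<K} (\<lambda>_. borel)). real i < (\<Sum>k<K. if u k \<le> c then 1 else 0)}"
    using ordered_pval_le_iff[OF assms] by (metis (no_types, lifting) of_nat_less_iff)
  also have "\<dots> \<in> sets (Pi\<^sub>M {..<K} (\<lambda>_. borel))"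
    by measurable
  finally show "{u \<in> space (Pi\<^sub>M {..<K} (\<lambda>_. borel)). ordered_pval K u i \<le> c} \<in> sets (Pi\<^sub>M {..<K} (\<lambda>_. borel))" .
qed

text \<open>Twice this is Fisher's combination statistic.\<close>
definition neg_log_sum :: "nat \<Rightarrow> (nat \<Rightarrow> real) \<Rightarrow> real" where
  "neg_log_sum K p = - (\<Sum>i<K. ln (p i))"

lemma ln_nonpos: "0 \<le> x \<Longrightarrow> x \<le> 1 \<Longrightarrow> ln (x::real) \<le> 0"
  by (cases "x = 0") auto

lemma neg_log_sum_nonneg: "(\<And>i. i < K \<Longrightarrow> 0 \<le> p i \<and> p i \<le> 1) \<Longrightarrow> 0 \<le> neg_log_sum K p"
  unfolding neg_log_sum_def by (auto intro!: sum_nonpos ln_nonpos)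

lemma neg_log_sum_ordered_pval: "neg_log_sum K (ordered_pval K p) = neg_log_sum K p"
  unfolding neg_log_sum_def by (rule arg_cong[OF sum_ordered_pval])

lemma AFp_stat_altdef:
  "AFp_stat K p = Max ((\<lambda>j. - ln (1 - chisq_CDF (2 * j) (2 * neg_log_sum j (ordered_pval K p)))) ` {1..K})"
  unfolding AFp_stat_def neg_log_sum_def by simp

lemma AFp_stat_ge_term:
  "1 \<le> j \<Longrightarrow> j \<le> K \<Longrightarrow> - ln (1 - chisq_CDF (2 * j) (2 * neg_log_sum j (ordered_pval K p))) \<le> AFp_stat K p"
  unfolding AFp_stat_altdef by (intro Max_ge) auto

lemma AFp_stat_nonneg: "1 \<le> K \<Longrightarrow> 0 \<le> AFp_stat K p"
  using AFp_stat_ge_term[of 1 K p] by (simp add: neg_ln_chisq_survival_2)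

lemma AFp_stat_ge_neg_ln:
  assumes "\<And>i. i < K \<Longrightarrow> 0 < p i" "k < K"
  shows "- ln (p k) \<le> AFp_stat K p"
proof -
  have "0 < ordered_pval K p 0"
    using ordered_pval_in_image[of 0 K p] assms by auto
  then have "- ln (p k) \<le> - ln (ordered_pval K p 0)"
    using assms ordered_pval_0_le[OF assms(2)] by simp
  also have "\<dots> \<le> - ln (1 - chisq_CDF (2 * 1) (2 * neg_log_sum 1 (ordered_pval K p)))"
    by (simp add: neg_ln_chisq_survival_2 neg_log_sum_def)
  also have "\<dots> \<le> AFp_stat K p"
    using assms(2) by (intro AFp_stat_ge_term) auto
  finally show ?thesis .
qed

lemma AFp_stat_le_neg_log_sum:
  assumes "\<And>i. i < K \<Longrightarrow> 0 \<le> p i \<and> p i \<le> 1" "1 \<le> K"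
  shows "AFp_stat K p \<le> neg_log_sum K p"
proof -
  have ordered_01: "0 \<le> ordered_pval K p i \<and> ordered_pval K p i \<le> 1" if "i < K" for i
    using ordered_pval_in_image[OF that, of p] assms(1) by auto
  have "- ln (1 - chisq_CDF (2 * j) (2 * neg_log_sum j (ordered_pval K p))) \<le> neg_log_sum K p"
    if j: "j \<in> {1..K}" for j
  proof -
    have "- ln (1 - chisq_CDF (2 * j) (2 * neg_log_sum j (ordered_pval K p)))
          \<le> max 0 (neg_log_sum j (ordered_pval K p))"
      using neg_ln_chisq_survival_le[of j "2 * neg_log_sum j (ordered_pval K p)"] j by simp
    also have "\<dots> \<le> neg_log_sum K (ordered_pval K p)"
      unfolding neg_log_sum_def using j ordered_01
      by (intro max.boundedI) (auto intro!: sum_nonneg sum_mono2 ln_nonpos simp: sum_negf[symmetric])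
    finally show ?thesis
      by (simp only: neg_log_sum_ordered_pval)
  qed
  then show ?thesis
    unfolding AFp_stat_altdef using assms(2) by (subst Max_le_iff) auto
qed

lemma AFp_stat_ge_neg_log_sum:
  assumes "\<And>i. i < K \<Longrightarrow> 0 < p i \<and> p i \<le> 1" "1 \<le> K"
  shows "neg_log_sum K p - ln (real K) - 2 * real K * sqrt (neg_log_sum K p) \<le> AFp_stat K p"
proof -
  have "0 \<le> neg_log_sum K p"
    using assms(1) by (intro neg_log_sum_nonneg) (auto simp: less_imp_le)
  then have "neg_log_sum K p - ln (real K) - 2 * real K * sqrt (neg_log_sum K p)
      \<le> - ln (1 - chisq_CDF (2 * K) (2 * neg_log_sum K (ordered_pval K p)))"
    unfolding neg_log_sum_ordered_pval by (rule neg_ln_chisq_survival_ge[OF assms(2)])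
  also have "\<dots> \<le> AFp_stat K p"
    using assms(2) by (rule AFp_stat_ge_term) simp
  finally show ?thesis .
qed

lemma borel_measurable_AFp_stat: "AFp_stat K \<in> borel_measurable (Pi\<^sub>M {..<K} (\<lambda>_. borel))"
proof -
  have "(\<lambda>u. - ln (1 - chisq_CDF (2 * j) (2 * neg_log_sum j (ordered_pval K u))))
          \<in> borel_measurable (Pi\<^sub>M {..<K} (\<lambda>_. borel))" if j: "j \<in> {1..K}" for j
  proof -
    obtain i where i: "j = Suc i"
      using j by (cases j) auto
    have [measurable]: "(\<lambda>u. ordered_pval K u k) \<in> borel_measurable (Pi\<^sub>M {..<K} (\<lambda>_. borel))"
      if "k < Suc i" for k
      using that i j by (intro borel_measurable_ordered_pval) auto
    show ?thesis
      unfolding neg_log_sum_def i by measurable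
  qed
  then show ?thesis
    unfolding AFp_stat_altdef by (intro borel_measurable_Max) auto
qed

abbreviation unit_uniform :: "real measure" where
  "unit_uniform \<equiv> uniform_measure lborel {0..1}"

lemma prob_space_unit_uniform: "prob_space unit_uniform"
  by (intro prob_space_uniform_measure) auto

lemma product_prob_space_unit_uniform: "product_prob_space (\<lambda>_::nat. unit_uniform)"
  by (simp add: product_prob_space_def product_prob_space_axioms_def product_sigma_finite_def
      prob_space_unit_uniform prob_space_imp_sigma_finite)

lemma prob_space_null_pvals: "prob_space (null_pvals K)"
  unfolding null_pvals_def by (intro prob_space_PiM prob_space_unit_uniform)

lemma sets_null_pvals: "sets (null_pvals K) = sets (Pi\<^sub>M {..<K} (\<lambda>_. borel))"
  unfolding null_pvals_def by (intro sets_PiM_cong) auto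

lemma borel_measurable_AFp_stat_null_pvals [measurable]: "AFp_stat K \<in> borel_measurable (null_pvals K)"
  using borel_measurable_AFp_stat by (simp add: measurable_cong_sets[OF sets_null_pvals refl])

lemma AE_null_pvals_unit_interval: "AE u in null_pvals K. \<forall>k<K. 0 < u k \<and> u k \<le> 1"
proof -
  interpret product_prob_space "\<lambda>_. unit_uniform" "{..<K}"
    by (rule product_prob_space_unit_uniform)
  have "AE x in unit_uniform. 0 < x \<and> x \<le> 1"
    by (rule AE_uniform_measureI) (use AE_lborel_singleton[of 0] in \<open>auto elim: eventually_mono\<close>)
  then have "AE u in null_pvals K. 0 < u k \<and> u k \<le> 1" if "k < K" for k
    unfolding null_pvals_def using that by (intro AE_component) auto
  then show ?thesis
    by (subst AE_all_countable) auto
qed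

lemma measure_null_pvals_component:
  assumes "k < K" "A \<in> sets borel"
  shows "measure (null_pvals K) {u \<in> space (null_pvals K). u k \<in> A} = measure unit_uniform A"
proof -
  interpret product_prob_space "\<lambda>_. unit_uniform" "{..<K}"
    by (rule product_prob_space_unit_uniform)
  interpret N: prob_space "null_pvals K"
    by (rule prob_space_null_pvals)
  have "emeasure (null_pvals K) {u \<in> space (null_pvals K). u k \<in> A} = emeasure unit_uniform A"
    unfolding null_pvals_def using assms by (intro emeasure_PiM_Collect_single) auto
  then show ?thesis
    by (simp add: N.emeasure_eq_measure M.emeasure_eq_measure)
qed

lemma AFp_pvalue_ge_exp:
  assumes "1 \<le> K" "0 \<le> t"
  shows "exp (- t) \<le> AFp_pvalue K t"
proof -
  interpret N: prob_space "null_pvals K"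
    by (rule prob_space_null_pvals)
  have exp_le_1: "exp (- t) \<le> 1"
    using assms by simp
  then have "{0..1} \<inter> {0<..exp (- t)} = {0<..exp (- t)}"
    by (auto intro: order_trans[OF _ exp_le_1])
  then have "exp (- t) = measure unit_uniform {0<..exp (- t)}"
    by simp
  also have "\<dots> = measure (null_pvals K) {u \<in> space (null_pvals K). u 0 \<in> {0<..exp (- t)}}"
    using assms by (intro measure_null_pvals_component[symmetric]) auto
  also have "\<dots> \<le> AFp_pvalue K t"
    unfolding AFp_pvalue_def
  proof (rule N.finite_measure_mono_AE)
    show "AE u in null_pvals K. u \<in> {u \<in> space (null_pvals K). u 0 \<in> {0<..exp (- t)}} \<longrightarrow>
                                 u \<in> {u \<in> space (null_pvals K). t \<le> AFp_stat K u}"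
      using AE_null_pvals_unit_interval
    proof eventually_elim
      case (elim u)
      have "t \<le> AFp_stat K u" if "0 < u 0" "u 0 \<le> exp (- t)"
      proof -
        have "t \<le> - ln (u 0)"
          using ln_mono[OF that(2,1)] by simp
        also have "\<dots> \<le> AFp_stat K u"
          using elim assms by (intro AFp_stat_ge_neg_ln) auto
        finally show ?thesis .
      qed
      then show ?case
        by auto
    qed
    show "{u \<in> space (null_pvals K). t \<le> AFp_stat K u} \<in> sets (null_pvals K)"
      by measurable
  qed
  finally show ?thesis .
qed

lemma nn_integral_unit_uniform_powr:
  assumes "0 \<le> a" "a < 1"
  shows "(\<integral>\<^sup>+x. ennreal (x powr - a) \<partial>unit_uniform) = ennreal (1 / (1 - a))"
proof -
  have "(\<integral>\<^sup>+x. ennreal (x powr - a) \<partial>unit_uniform)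
      = (\<integral>\<^sup>+x. ennreal (x powr - a) * indicator {0..1} x \<partial>lborel) / emeasure lborel {0..1::real}"
    by (rule nn_integral_uniform_measure) auto
  also have "\<dots> = (\<integral>\<^sup>+x. ennreal (indicator {0..1} x * x powr - a) \<partial>lborel)"
    by (auto intro!: nn_integral_cong simp: indicator_def divide_ennreal_def)
  also have "\<dots> = ennreal (1 powr (- a + 1) / (- a + 1))"
    using assms by (intro nn_integral_has_integral_lebesgue has_integral_powr_from_0) auto
  finally show ?thesis
    by simp
qed

lemma prod_powr_neg_eq_exp_neg_log_sum:
  assumes "\<And>k. k < K \<Longrightarrow> 0 < u k"
  shows "(\<Prod>k<K. u k powr - a) = exp (a * neg_log_sum K u)"
proof -
  have "(\<Prod>k<K. u k powr - a) = (\<Prod>k<K. exp (- a * ln (u k)))"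
  proof (rule prod.cong[OF refl])
    fix k assume "k \<in> {..<K}"
    then have "u k \<noteq> 0"
      using assms by force
    then show "u k powr - a = exp (- a * ln (u k))"
      by (simp add: powr_def)
  qed
  also have "\<dots> = exp (\<Sum>k<K. - a * ln (u k))"
    by (simp add: exp_sum)
  also have "(\<Sum>k<K. - a * ln (u k)) = a * neg_log_sum K u"
    unfolding neg_log_sum_def by (simp add: sum_distrib_left sum_negf)
  finally show ?thesis .
qed

lemma nn_integral_null_pvals_prod_powr:
  assumes "0 \<le> a" "a < 1"
  shows "(\<integral>\<^sup>+u. (\<Prod>k<K. ennreal (u k powr - a)) \<partial>null_pvals K) = ennreal (1 / (1 - a)) ^ K"
proof -
  interpret product_prob_space "\<lambda>_. unit_uniform" "{..<K}"
    by (rule product_prob_space_unit_uniform)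
  have "(\<integral>\<^sup>+u. (\<Prod>k<K. ennreal (u k powr - a)) \<partial>null_pvals K)
      = (\<Prod>k<K. \<integral>\<^sup>+x. ennreal (x powr - a) \<partial>unit_uniform)"
    unfolding null_pvals_def by (rule product_nn_integral_prod[where f="\<lambda>_ x. ennreal (x powr - a)"]) auto
  then show ?thesis
    by (simp add: nn_integral_unit_uniform_powr[OF assms])
qed

lemma null_pvals_neg_log_sum_tail:
  assumes "0 \<le> a" "a < 1"
  shows "measure (null_pvals K) {u \<in> space (null_pvals K). t \<le> neg_log_sum K u} \<le> exp (- a * t) / (1 - a) ^ K"
proof -
  interpret N: prob_space "null_pvals K"
    by (rule prob_space_null_pvals)
  define S where "S = {u \<in> space (null_pvals K). t \<le> neg_log_sum K u}"
  have S_sets: "S \<in> sets (null_pvals K)"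
    unfolding S_def neg_log_sum_def null_pvals_def by measurable
  have "emeasure (null_pvals K) S = (\<integral>\<^sup>+u. indicator S u \<partial>null_pvals K)"
    using S_sets by simp
  also have "\<dots> \<le> (\<integral>\<^sup>+u. ennreal (exp (- a * t)) * (\<Prod>k<K. ennreal (u k powr - a)) \<partial>null_pvals K)"
  proof (rule nn_integral_mono_AE)
    show "AE u in null_pvals K. indicator S u \<le> ennreal (exp (- a * t)) * (\<Prod>k<K. ennreal (u k powr - a))"
      using AE_null_pvals_unit_interval
    proof eventually_elim
      case (elim u)
      have "indicator S u \<le> ennreal (exp (a * (neg_log_sum K u - t)))"
        using assms by (auto simp: S_def indicator_def)
      also have "exp (a * (neg_log_sum K u - t)) = exp (- a * t) * (\<Prod>k<K. u k powr - a)"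
        using elim by (simp add: prod_powr_neg_eq_exp_neg_log_sum algebra_simps flip: exp_add)
      finally show ?case
        by (simp add: ennreal_mult prod_ennreal prod_nonneg)
    qed
  qed
  also have "\<dots> = ennreal (exp (- a * t)) * (\<integral>\<^sup>+u. (\<Prod>k<K. ennreal (u k powr - a)) \<partial>null_pvals K)"
    unfolding null_pvals_def by (rule nn_integral_cmult) measurable
  also have "\<dots> = ennreal (exp (- a * t)) * ennreal (1 / (1 - a)) ^ K"
    by (simp only: nn_integral_null_pvals_prod_powr[OF assms])
  also have "\<dots> = ennreal (exp (- a * t) / (1 - a) ^ K)"
    using assms by (simp add: ennreal_power ennreal_mult[symmetric] power_one_over)
  finally show ?thesis
    unfolding S_def N.emeasure_eq_measure using assms by simp
qed

lemma AFp_pvalue_le_exp: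
  assumes "1 \<le> K" "0 \<le> a" "a < 1"
  shows "AFp_pvalue K t \<le> exp (- a * t) / (1 - a) ^ K"
proof -
  interpret N: prob_space "null_pvals K"
    by (rule prob_space_null_pvals)
  have "AFp_pvalue K t \<le> measure (null_pvals K) {u \<in> space (null_pvals K). t \<le> neg_log_sum K u}"
    unfolding AFp_pvalue_def
  proof (rule N.finite_measure_mono_AE)
    show "AE u in null_pvals K. u \<in> {u \<in> space (null_pvals K). t \<le> AFp_stat K u} \<longrightarrow>
                                 u \<in> {u \<in> space (null_pvals K). t \<le> neg_log_sum K u}"
      using AE_null_pvals_unit_interval
    proof eventually_elim
      case (elim u)
      then have "AFp_stat K u \<le> neg_log_sum K u"
        using assms by (intro AFp_stat_le_neg_log_sum) auto
      then show ?case
        by auto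
    qed
  qed (unfold neg_log_sum_def null_pvals_def, measurable)
  also have "\<dots> \<le> exp (- a * t) / (1 - a) ^ K"
    using assms by (intro null_pvals_neg_log_sum_tail) auto
  finally show ?thesis .
qed

lemma neg_ln_AFp_pvalue_le_neg_log_sum:
  assumes p: "\<And>i. i < K \<Longrightarrow> 0 < p i \<and> p i \<le> 1" and K: "1 \<le> K"
  shows "- ln (AFp_pvalue K (AFp_stat K p)) \<le> neg_log_sum K p"
proof -
  have "exp (- AFp_stat K p) \<le> AFp_pvalue K (AFp_stat K p)"
    using K by (intro AFp_pvalue_ge_exp AFp_stat_nonneg)
  then have "- ln (AFp_pvalue K (AFp_stat K p)) \<le> AFp_stat K p"
    using ln_mono by fastforce
  also have "\<dots> \<le> neg_log_sum K p"
    using p K by (intro AFp_stat_le_neg_log_sum) (auto simp: less_imp_le)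
  finally show ?thesis .
qed

lemma neg_ln_AFp_pvalue_ge:
  assumes p: "\<And>i. i < K \<Longrightarrow> 0 < p i \<and> p i \<le> 1" and K: "1 \<le> K" and r: "1 < r"
  shows "(1 - 1 / r) * (neg_log_sum K p - ln (real K) - 2 * real K * sqrt (neg_log_sum K p)) - real K * ln r
           \<le> - ln (AFp_pvalue K (AFp_stat K p))"
proof -
  define T where "T = AFp_stat K p"
  define a where "a = 1 - 1 / r"
  have a: "0 \<le> a" "a < 1" "1 - a = 1 / r"
    using r by (auto simp: a_def)
  have "exp (- T) \<le> AFp_pvalue K T"
    unfolding T_def using K by (intro AFp_pvalue_ge_exp AFp_stat_nonneg)
  then have pos: "0 < AFp_pvalue K T"
    using exp_gt_zero less_le_trans by blast
  have "ln (AFp_pvalue K T) \<le> ln (exp (- a * T) / (1 - a) ^ K)"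
    using AFp_pvalue_le_exp[OF K a(1,2)] pos by (intro ln_mono) auto
  also have "\<dots> = - a * T + real K * ln r"
    using r unfolding a(3) by (simp add: ln_div ln_realpow)
  finally have "a * T - real K * ln r \<le> - ln (AFp_pvalue K T)"
    by simp
  moreover have "a * (neg_log_sum K p - ln (real K) - 2 * real K * sqrt (neg_log_sum K p)) \<le> a * T"
    unfolding T_def using p K a by (intro mult_left_mono AFp_stat_ge_neg_log_sum) auto
  ultimately show ?thesis
    unfolding T_def a_def by linarith
qed

lemma tendsto_neg_ln_AFp_pvalue:
  fixes n :: "nat \<Rightarrow> real"
  assumes n: "filterlim n at_top sequentially"
    and p: "\<And>m i. i < K \<Longrightarrow> 0 < p m i \<and> p m i \<le> 1" and K: "1 \<le> K"
    and lim: "(\<lambda>m. 2 * neg_log_sum K (p m) / n m) \<longlonglongrightarrow> L"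
  shows "(\<lambda>m. - (2 / n m) * ln (AFp_pvalue K (AFp_stat K (p m)))) \<longlonglongrightarrow> L"
proof -
  define s where "s m = neg_log_sum K (p m)" for m
  (* the lower bound neg_ln_AFp_pvalue_ge with r = n m, arranged so that every factor converges *)
  define lo where "lo m = (1 - 1 / n m) * (2 * s m / n m - 2 * ln (real K) / n m
      - 4 * real K * sqrt (2 * s m / n m / 2 * (1 / n m))) - 2 * real K * (ln (n m) / n m)" for m
  have inv: "(\<lambda>m. c / n m) \<longlonglongrightarrow> 0" for c :: real
    using n by (intro tendsto_divide_0[OF tendsto_const] filterlim_at_top_imp_at_infinity)
  have "(\<lambda>m. ln (n m) / n m) \<longlonglongrightarrow> 0"
    using filterlim_compose[OF ln_x_over_x_tendsto_0 n] by simp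
  then have "lo \<longlonglongrightarrow> (1 - 0) * (L - 0 - 4 * real K * sqrt (L / 2 * 0)) - 2 * real K * 0"
    unfolding lo_def s_def by (intro tendsto_intros lim inv) auto
  then have lo_lim: "lo \<longlonglongrightarrow> L"
    by simp
  have "eventually (\<lambda>m. lo m \<le> - (2 / n m) * ln (AFp_pvalue K (AFp_stat K (p m))) \<and>
      - (2 / n m) * ln (AFp_pvalue K (AFp_stat K (p m))) \<le> 2 * s m / n m) sequentially"
    using filterlim_at_top_dense[THEN iffD1, OF n, rule_format, of 1]
  proof eventually_elim
    case (elim m)
    have sqrt_eq: "sqrt (2 * s m / n m / 2 * (1 / n m)) = sqrt (s m) / n m"
      using elim by (simp add: real_sqrt_divide real_sqrt_mult power2_eq_square[symmetric])
    have "lo m = (2 / n m) * ((1 - 1 / n m) * (s m - ln (real K) - 2 * real K * sqrt (s m))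
        - real K * ln (n m))"
      unfolding lo_def sqrt_eq using elim by (simp add: field_simps)
    also have "\<dots> \<le> (2 / n m) * - ln (AFp_pvalue K (AFp_stat K (p m)))"
      unfolding s_def using elim p K by (intro mult_left_mono neg_ln_AFp_pvalue_ge) auto
    finally have "lo m \<le> - (2 / n m) * ln (AFp_pvalue K (AFp_stat K (p m)))"
      by simp
    moreover have "- ln (AFp_pvalue K (AFp_stat K (p m))) \<le> s m"
      unfolding s_def using p K by (rule neg_ln_AFp_pvalue_le_neg_log_sum)
    then have "(2 / n m) * - ln (AFp_pvalue K (AFp_stat K (p m))) \<le> (2 / n m) * s m"
      using elim by (intro mult_left_mono) auto
    ultimately show ?case
      by simp
  qed
  then show ?thesis
    using tendsto_sandwich[OF _ _ lo_lim lim[folded s_def]] by (simp add: eventually_conj_iff)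
qed

lemma tendsto_rescaled_slope:
  fixes N :: "nat \<Rightarrow> nat" and n :: "nat \<Rightarrow> real"
  assumes f: "(\<lambda>k. f k / real k) \<longlonglongrightarrow> c"
    and ratio: "(\<lambda>m. real (N m) / n m) \<longlonglongrightarrow> lam" and "0 < lam"
    and n: "filterlim n at_top sequentially"
  shows "(\<lambda>m. f (N m) / n m) \<longlonglongrightarrow> lam * c"
proof -
  have n_pos: "eventually (\<lambda>m. 0 < n m) sequentially"
    using n by (simp add: filterlim_at_top_dense)
  have "filterlim (\<lambda>m. real (N m) / n m * n m) at_top sequentially"
    using ratio \<open>0 < lam\<close> n by (rule filterlim_tendsto_pos_mult_at_top)
  then have "filterlim (\<lambda>m. real (N m)) at_top sequentially"
    by (rule filterlim_cong[THEN iffD1, rotated 3]) (use n_pos in \<open>auto elim: eventually_mono\<close>)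
  then have N: "filterlim N at_top sequentially"
    by (simp add: filterlim_sequentially_iff_filterlim_real)
  have "(\<lambda>m. real (N m) / n m * (f (N m) / real (N m))) \<longlonglongrightarrow> lam * c"
    using ratio filterlim_compose[OF f N] by (rule tendsto_mult)
  moreover have "eventually (\<lambda>m. real (N m) / n m * (f (N m) / real (N m)) = f (N m) / n m) sequentially"
    using N[unfolded filterlim_at_top, rule_format, of 1] by eventually_elim simp
  ultimately show ?thesis
    by (rule Lim_transform_eventually)
qed

theorem theorem1:
  fixes M :: "'a measure"
    and K l :: nat
    and \<Theta> \<Theta>0 :: "nat \<Rightarrow> 'b set"
    and \<theta> :: "nat \<Rightarrow> 'b"
    and c :: "nat \<Rightarrow> 'b \<Rightarrow> real"
    and P :: "nat \<Rightarrow> nat \<Rightarrow> 'a \<Rightarrow> real"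
    and N :: "nat \<Rightarrow> nat \<Rightarrow> nat"
    and lam :: "nat \<Rightarrow> real"
  assumes M: "prob_space M"
    and K: "1 \<le> K"
    and l: "l \<le> K"
    and Theta: "\<And>i. i < K \<Longrightarrow> \<Theta>0 i \<subseteq> \<Theta> i"
    and c_null: "\<And>i t. i < K \<Longrightarrow> t \<in> \<Theta>0 i \<Longrightarrow> c i t = 0"
    and c_alt: "\<And>i t. i < K \<Longrightarrow> t \<in> \<Theta> i - \<Theta>0 i \<Longrightarrow> c i t > 0"
    and theta_alt: "\<And>i. i < l \<Longrightarrow> \<theta> i \<in> \<Theta> i - \<Theta>0 i"
    and theta_null: "\<And>i. l \<le> i \<Longrightarrow> i < K \<Longrightarrow> \<theta> i \<in> \<Theta>0 i"
    and pval_range: "\<And>i k \<omega>. i < K \<Longrightarrow> \<omega> \<in> space M \<Longrightarrow> 0 < P i k \<omega> \<and> P i k \<omega> \<le> 1"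
    and slope: "\<And>i. i < K \<Longrightarrow>
       AE \<omega> in M. (\<lambda>k. - (2 / real k) * ln (P i k \<omega>)) \<longlonglongrightarrow> c i (\<theta> i)"
    and n_inf: "filterlim (\<lambda>m. (\<Sum>i<K. real (N i m)) / real K) at_top sequentially"
    and ratio: "\<And>i. i < K \<Longrightarrow>
       (\<lambda>m. real (N i m) / ((\<Sum>i<K. real (N i m)) / real K)) \<longlonglongrightarrow> lam i"
    and lam_pos: "\<And>i. i < K \<Longrightarrow> lam i > 0"
    and lam_sum: "(\<Sum>i<K. lam i) = real K"
    and order: "\<And>i j. i \<le> j \<Longrightarrow> j < K \<Longrightarrow> lam j * c j (\<theta> j) \<le> lam i * c i (\<theta> i)"
  shows "AE \<omega> in M.
     (\<lambda>m. - (2 / ((\<Sum>i<K. real (N i m)) / real K))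
            * ln (AFp_pvalue K (AFp_stat K (\<lambda>i. P i (N i m) \<omega>))))
     \<longlonglongrightarrow> (\<Sum>i<l. lam i * c i (\<theta> i))"
proof -
  define n where "n m = (\<Sum>i<K. real (N i m)) / real K" for m
  have null_terms: "(\<Sum>i<K. lam i * c i (\<theta> i)) = (\<Sum>i<l. lam i * c i (\<theta> i))"
    using l c_null theta_null by (intro sum.mono_neutral_right) auto
  have "AE \<omega> in M. \<forall>i<K. (\<lambda>k. - 2 * ln (P i k \<omega>) / real k) \<longlonglongrightarrow> c i (\<theta> i)"
    using slope by (subst AE_all_countable) auto
  then show ?thesis
    using AE_space
  proof eventually_elim
    case (elim \<omega>)
    have "(\<lambda>m. - 2 * ln (P i (N i m) \<omega>) / n m) \<longlonglongrightarrow> lam i * c i (\<theta> i)" if "i < K" for i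
      using elim(1) that ratio[OF that] lam_pos[OF that] n_inf unfolding n_def
      by (intro tendsto_rescaled_slope) auto
    then have "(\<lambda>m. \<Sum>i<K. - 2 * ln (P i (N i m) \<omega>) / n m) \<longlonglongrightarrow> (\<Sum>i<l. lam i * c i (\<theta> i))"
      unfolding null_terms[symmetric] by (intro tendsto_sum) auto
    then have "(\<lambda>m. 2 * neg_log_sum K (\<lambda>i. P i (N i m) \<omega>) / n m) \<longlonglongrightarrow> (\<Sum>i<l. lam i * c i (\<theta> i))"
      by (simp add: neg_log_sum_def sum_divide_distrib sum_distrib_left sum_negf)
    then show ?case
      using pval_range elim(2) K n_inf unfolding n_def by (intro tendsto_neg_ln_AFp_pvalue) auto
  qed
qed

end
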